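(* Let $0\le\lambda<\gamma\le\delta$ and let $\mathfrak{f}=\mathfrak{s}+\overline{\mathfrak{t}}\in\mathcal{R}_H^0(\gamma,\delta,\lambda)$ with $\mathfrak{t}(z)=\sum_{m\ge2}b_mz^m$. Then for every $m\ge2$, $$|b_m|\le\frac{2(\gamma-\lambda)}{m^2[2\gamma+(\delta-\gamma)(m-1)]}.$$ The result is sharp: equality holds for the function $\mathfrak{f}(z)=z+\frac{2(\gamma-\lambda)}{m^2[2\gamma+(\delta-\gamma)(m-1)]}\bar z^m$.
   Context: Let $\mathcal{U}=\{z\in\mathbb{C}:|z|<1\}$. $\mathcal{H}^0$ denotes the class of complex-valued harmonic functions $\mathfrak{f}=\mathfrak{s}+\overline{\mathfrak{t}}$ on $\mathcal{U}$, where $\mathfrak{s}(z)=z+\sum_{m\ge2}a_mz^m$ and $\mathfrak{t}(z)=\sum_{m\ge2}b_mz^m$ are analytic in $\mathcal{U}$. For real $0\le\lambda<\gamma\le\delta$, $\mathcal{R}_H^0(\gamma,\delta,\lambda)$ is the class of $\mathfrak{f}=\mathfrak{s}+\overline{\mathfrak{t}}\in\mathcal{H}^0$ such that for all $z\in\mathcal{U}$, $\mathrm{Re}\left[\gamma\mathfrak{s}'(z)+\delta z\mathfrak{s}''(z)+\frac{\delta-\gamma}{2}z^2\mathfrak{s}'''(z)-\lambda\right]>\left|\gamma\mathfrak{t}'(z)+\delta z\mathfrak{t}''(z)+\frac{\delta-\gamma}{2}z^2\mathfrak{t}'''(z)\right|$. *)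

theory Defs
  imports "HOL-Analysis.Analysis"
begin

abbreviation unit_disk :: "complex set" where
  "unit_disk \<equiv> ball 0 1"

definition taylor_coeff :: "(complex \<Rightarrow> complex) \<Rightarrow> nat \<Rightarrow> complex" where
  "taylor_coeff g m = (deriv ^^ m) g 0 / of_nat (fact m)"

text \<open>The class H^0: f = s + conj t with s(z) = z + sum a_m z^m, t(z) = sum_{m>=2} b_m z^m
  analytic on U. A harmonic function is represented by the pair (s, t).\<close>
definition H0 :: "(complex \<Rightarrow> complex) \<Rightarrow> (complex \<Rightarrow> complex) \<Rightarrow> bool" where
  "H0 s t \<longleftrightarrow> s holomorphic_on unit_disk \<and> t holomorphic_on unit_disk \<and>
     s 0 = 0 \<and> deriv s 0 = 1 \<and> t 0 = 0 \<and> deriv t 0 = 0"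

definition Lop :: "real \<Rightarrow> real \<Rightarrow> (complex \<Rightarrow> complex) \<Rightarrow> complex \<Rightarrow> complex" where
  "Lop \<gamma> \<delta> g z = of_real \<gamma> * deriv g z + of_real \<delta> * z * (deriv ^^ 2) g z
     + of_real ((\<delta> - \<gamma>) / 2) * z^2 * (deriv ^^ 3) g z"

definition RH0 :: "real \<Rightarrow> real \<Rightarrow> real \<Rightarrow> (complex \<Rightarrow> complex) \<Rightarrow> (complex \<Rightarrow> complex) \<Rightarrow> bool" where
  "RH0 \<gamma> \<delta> lam s t \<longleftrightarrow> H0 s t \<and>
     (\<forall>z\<in>unit_disk. Re (Lop \<gamma> \<delta> s z - of_real lam) > cmod (Lop \<gamma> \<delta> t z))"

end

(*
  The operator Lop = gamma D + delta z D^2 + (delta - gamma)/2 z^2 D^3 acts coefficientwise on power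
  series: it sends z^m to M_m z^(m-1) with M_m = m^2 (2 gamma + (delta - gamma)(m - 1)) / 2, so the
  (m-1)-st Taylor coefficient of Lop t is M_m b_m. If |q| <= Re p on the unit disk, Cauchy's
  formula on circles of radius r < 1 together with the mean value property of Re p bounds every
  Taylor coefficient of q by Re p(0). Applied to q = Lop t and p = Lop s - lambda, for which
  Re p(0) = gamma - lambda, this gives M_m |b_m| <= gamma - lambda. Equality is attained by
  t = c z^m with c M_m = gamma - lambda, since then |Lop t(z)| = (gamma - lambda) |z|^(m-1).
*)
theory Submission
  imports Defs "HOL-Complex_Analysis.Complex_Analysis"
begin

lemma pochhammer_Suc_diff_conv_choose:
  "pochhammer (of_nat (Suc n - j) :: 'a::field_char_0) j = of_nat (n choose j) * fact j"
proof (cases "j \<le> n")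
  case True
  then have "of_nat (Suc n - j) = (of_nat n - of_nat j + 1 :: 'a)"
    by (simp add: of_nat_diff)
  then show ?thesis
    by (simp add: binomial_gbinomial gbinomial_pochhammer')
next
  case False
  then show ?thesis by (simp add: pochhammer_0_left)
qed

lemma higher_deriv_power_at_centre:
  "(deriv ^^ i) (\<lambda>z. (z - w) ^ j) w = (if i = j then fact j else 0)"
  by (cases i j rule: linorder_cases)
    (simp_all add: higher_deriv_power pochhammer_0_left pochhammer_fact)

lemma power_times_higher_deriv_power:
  "(z - w) ^ j * (deriv ^^ j) (\<lambda>z. (z - w) ^ n) z = of_nat (n choose j) * fact j * (z - w) ^ n"
  unfolding higher_deriv_power pochhammer_Suc_diff_conv_choose
  by (cases "j \<le> n") (simp_all add: power_add[symmetric])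

lemma higher_deriv_power_times_higher_deriv:
  fixes h :: "complex \<Rightarrow> complex"
  assumes "h holomorphic_on S" "open S" "w \<in> S"
  shows "(deriv ^^ n) (\<lambda>z. (z - w) ^ j * (deriv ^^ j) h z) w
           = of_nat (n choose j) * fact j * (deriv ^^ n) h w"
proof -
  have "(deriv ^^ n) (\<lambda>z. (z - w) ^ j * (deriv ^^ j) h z) w
      = (\<Sum>i = 0..n. of_nat (n choose i) * (deriv ^^ i) (\<lambda>z. (z - w) ^ j) w
                       * (deriv ^^ (n - i)) ((deriv ^^ j) h) w)"
    using assms by (intro higher_deriv_mult holomorphic_intros holomorphic_higher_deriv)
  also have "\<dots> = (\<Sum>i = 0..n. if i = j then of_nat (n choose j) * fact j * (deriv ^^ n) h w else 0)"
  proof (intro sum.cong refl)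
    fix i assume "i \<in> {0..n}"
    then have "i = j \<Longrightarrow> (deriv ^^ (n - i)) ((deriv ^^ j) h) = (deriv ^^ n) h"
      by (simp flip: funpow_add[THEN fun_cong, unfolded comp_def])
    then show "of_nat (n choose i) * (deriv ^^ i) (\<lambda>z. (z - w) ^ j) w * (deriv ^^ (n - i)) ((deriv ^^ j) h) w
        = (if i = j then of_nat (n choose j) * fact j * (deriv ^^ n) h w else 0)"
      by (simp add: higher_deriv_power_at_centre)
  qed
  also have "\<dots> = of_nat (n choose j) * fact j * (deriv ^^ n) h w"
    by (simp add: binomial_eq_0)
  finally show ?thesis .
qed

lemma deriv_monomial: "deriv (\<lambda>z. a * z ^ m) = (\<lambda>z. a * of_nat m * z ^ (m - 1))"
  by (rule ext, rule DERIV_imp_deriv) (auto intro!: derivative_eq_intros)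

lemma taylor_coeff_monomial: "taylor_coeff (\<lambda>z. a * z ^ m) m = a"
  using higher_deriv_cmult[of "\<lambda>z. z ^ m" UNIV 0 m a] higher_deriv_power[of m "0::complex" m "0::complex"]
  by (simp add: taylor_coeff_def higher_deriv_power pochhammer_fact[symmetric] holomorphic_intros)

lemma taylor_coeff_circle_integral:
  fixes f :: "complex \<Rightarrow> complex"
  assumes "continuous_on (cball 0 r) f" "f holomorphic_on ball 0 r" "0 < r"
  shows "((\<lambda>x. f (circlepath 0 r x) * (of_real r / circlepath 0 r x) ^ k)
           has_integral of_real r ^ k * taylor_coeff f k) {0..1}"
proof -
  have "((\<lambda>u. f u / (u - 0) ^ Suc k) has_contour_integral (2 * pi * \<i> / fact k * (deriv ^^ k) f 0))
          (circlepath 0 r)"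
    using assms by (intro Cauchy_has_contour_integral_higher_derivative_circlepath) auto
  then have "((\<lambda>x. 2 * pi * \<i> * (f (circlepath 0 r x) / circlepath 0 r x ^ k))
               has_integral (2 * pi * \<i> / fact k * (deriv ^^ k) f 0)) {0..1}"
    unfolding has_contour_integral_def
    by (rule has_integral_eq[rotated], subst vector_derivative_circlepath01)
      (use \<open>0 < r\<close> in \<open>auto simp: circlepath field_simps\<close>)
  from has_integral_mult_right[OF this, of "of_real r ^ k / (2 * pi * \<i>)"]
  show ?thesis
    by (simp add: taylor_coeff_def power_divide field_simps)
qed

lemma norm_taylor_coeff_le_Re_circle:
  fixes p q :: "complex \<Rightarrow> complex"
  assumes "continuous_on (cball 0 r) q" "q holomorphic_on ball 0 r"
    and "continuous_on (cball 0 r) p" "p holomorphic_on ball 0 r"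
    and "0 < r" and le: "\<And>z. cmod z = r \<Longrightarrow> cmod (q z) \<le> Re (p z)"
  shows "cmod (taylor_coeff q k) * r ^ k \<le> Re (p 0)"
proof -
  let ?c = "circlepath 0 r"
  have Iq: "((\<lambda>x. q (?c x) * (of_real r / ?c x) ^ k) has_integral of_real r ^ k * taylor_coeff q k) {0..1}"
    using assms by (intro taylor_coeff_circle_integral)
  \<comment> \<open>for k = 0 the same formula is the mean value property of p\<close>
  have "((\<lambda>x. p (?c x) * (of_real r / ?c x) ^ 0) has_integral of_real r ^ 0 * taylor_coeff p 0) {0..1}"
    using assms by (intro taylor_coeff_circle_integral)
  then have Ip: "((\<lambda>x. Re (p (?c x))) has_integral Re (p 0)) {0..1}"
    by (auto simp: taylor_coeff_def dest: has_integral_Re)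
  have norm_c: "cmod (?c x) = r" for x
    using \<open>0 < r\<close> by (simp add: circlepath norm_mult)
  have "norm (integral {0..1} (\<lambda>x. q (?c x) * (of_real r / ?c x) ^ k)) \<le> integral {0..1} (\<lambda>x. Re (p (?c x)))"
  proof (rule integral_norm_bound_integral)
    fix x
    show "norm (q (?c x) * (of_real r / ?c x) ^ k) \<le> Re (p (?c x))"
      using le[OF norm_c] norm_c \<open>0 < r\<close> by (simp add: norm_mult norm_divide norm_power)
  qed (use Iq Ip in blast)+
  then show ?thesis
    using integral_unique[OF Iq] integral_unique[OF Ip] \<open>0 < r\<close>
    by (simp add: norm_mult norm_power mult.commute)
qed

lemma norm_taylor_coeff_le_Re_disk:
  fixes p q :: "complex \<Rightarrow> complex"
  assumes q: "q holomorphic_on unit_disk" and p: "p holomorphic_on unit_disk"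
    and le: "\<And>z. z \<in> unit_disk \<Longrightarrow> cmod (q z) \<le> Re (p z)"
  shows "cmod (taylor_coeff q k) \<le> Re (p 0)"
proof -
  have bound_r: "cmod (taylor_coeff q k) * r ^ k \<le> Re (p 0)" if r: "0 < r" "r < 1" for r
  proof (rule norm_taylor_coeff_le_Re_circle)
    have sub: "cball 0 r \<subseteq> unit_disk"
      using r by auto
    show "continuous_on (cball 0 r) q" "continuous_on (cball 0 r) p"
      using sub q p by (meson holomorphic_on_imp_continuous_on holomorphic_on_subset)+
    show "q holomorphic_on ball 0 r" "p holomorphic_on ball 0 r"
      using sub ball_subset_cball q p by (meson holomorphic_on_subset order_trans)+
  qed (use r le in auto)
  have "eventually (\<lambda>r. cmod (taylor_coeff q k) * r ^ k \<le> Re (p 0)) (at_left 1)"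
    using eventually_at_left_real[OF zero_less_one] by (rule eventually_mono) (use bound_r in auto)
  moreover have "((\<lambda>r. cmod (taylor_coeff q k) * r ^ k) \<longlongrightarrow> cmod (taylor_coeff q k) * 1 ^ k) (at_left 1)"
    by (intro tendsto_intros)
  ultimately show ?thesis
    using tendsto_upperbound trivial_limit_at_left_real by fastforce
qed

lemma Lop_holomorphic:
  assumes "g holomorphic_on S" "open S"
  shows "Lop \<gamma> \<delta> g holomorphic_on S"
  unfolding Lop_def using assms
  by (intro holomorphic_intros holomorphic_deriv holomorphic_higher_deriv)

lemma Lop_conv_higher_deriv:
  "Lop \<gamma> \<delta> g z = of_real \<gamma> * (z ^ 0 * (deriv ^^ 0) (deriv g) z)
     + of_real \<delta> * (z ^ 1 * (deriv ^^ 1) (deriv g) z)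
     + of_real ((\<delta> - \<gamma>) / 2) * (z ^ 2 * (deriv ^^ 2) (deriv g) z)"
  unfolding Lop_def by (simp add: funpow_Suc_right numeral_3_eq_3 numeral_2_eq_2 mult.assoc)

definition Lop_multiplier :: "real \<Rightarrow> real \<Rightarrow> nat \<Rightarrow> real" where
  "Lop_multiplier \<gamma> \<delta> m = (real m)^2 * (2 * \<gamma> + (\<delta> - \<gamma>) * (real m - 1)) / 2"

lemma Lop_multiplier_Suc:
  "Lop_multiplier \<gamma> \<delta> (Suc k) = real (Suc k) * (\<gamma> + \<delta> * real k + (\<delta> - \<gamma>) * real (k choose 2))"
proof -
  have "2 * real (k choose 2) = real k * (real k - 1)"
    by (induction k) (simp_all add: numeral_2_eq_2 algebra_simps)
  then have choose2: "real (k choose 2) = real k * (real k - 1) / 2"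
    by simp
  show ?thesis
    unfolding Lop_multiplier_def choose2 by (simp add: power2_eq_square field_simps)
qed

lemma Lop_multiplier_pos:
  assumes "0 < \<gamma>" "\<gamma> \<le> \<delta>" "m \<ge> 1"
  shows "0 < Lop_multiplier \<gamma> \<delta> m"
  using assms unfolding Lop_multiplier_def by (simp add: add_pos_nonneg)

lemma higher_deriv_Lop_at_0:
  assumes "g holomorphic_on S" "open S" "0 \<in> S"
  shows "(deriv ^^ k) (Lop \<gamma> \<delta> g) 0
           = of_real (\<gamma> + \<delta> * real k + (\<delta> - \<gamma>) * real (k choose 2)) * (deriv ^^ Suc k) g 0"
proof -
  define T where "T j = (\<lambda>z. z ^ j * (deriv ^^ j) (deriv g) z)" for j
  have hol: "T j holomorphic_on S" for j
    unfolding T_def using assms by (intro holomorphic_intros holomorphic_higher_deriv holomorphic_deriv)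
  have "(deriv ^^ k) (deriv g) = (deriv ^^ Suc k) g"
    by (simp only: funpow_Suc_right comp_def)
  then have DT: "(deriv ^^ k) (T j) 0 = of_nat (k choose j) * fact j * (deriv ^^ Suc k) g 0" for j
    using higher_deriv_power_times_higher_deriv[OF holomorphic_deriv[OF assms(1,2)] assms(2,3), of k j]
    by (simp add: T_def)
  have "Lop \<gamma> \<delta> g = (\<lambda>z. (of_real \<gamma> * T 0 z + of_real \<delta> * T 1 z) + of_real ((\<delta> - \<gamma>) / 2) * T 2 z)"
    by (rule ext) (simp only: Lop_conv_higher_deriv T_def)
  then have "(deriv ^^ k) (Lop \<gamma> \<delta> g) 0
      = of_real \<gamma> * (deriv ^^ k) (T 0) 0 + of_real \<delta> * (deriv ^^ k) (T 1) 0
        + of_real ((\<delta> - \<gamma>) / 2) * (deriv ^^ k) (T 2) 0"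
    using assms hol
    by (simp add: higher_deriv_add[of _ S] higher_deriv_cmult[of _ S] holomorphic_intros del: of_real_divide of_real_diff)
  then show ?thesis
    by (simp add: DT) (simp add: field_simps)
qed

lemma taylor_coeff_Lop:
  assumes "g holomorphic_on S" "open S" "0 \<in> S"
  shows "taylor_coeff (Lop \<gamma> \<delta> g) k = of_real (Lop_multiplier \<gamma> \<delta> (Suc k)) * taylor_coeff g (Suc k)"
proof -
  have cancel: "e * D / F = (N * e) * (D / (N * F))" if "N \<noteq> 0" for N F e D :: complex
    using that by (simp add: field_simps)
  show ?thesis
    unfolding taylor_coeff_def higher_deriv_Lop_at_0[OF assms] Lop_multiplier_Suc fact_Suc
      of_nat_id of_nat_mult of_real_mult of_real_of_nat_eq
    by (rule cancel) (rule of_nat_neq_0)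
qed

lemma Lop_monomial:
  "Lop \<gamma> \<delta> (\<lambda>z. a * z ^ m) z = of_real (Lop_multiplier \<gamma> \<delta> m) * a * z ^ (m - 1)"
proof -
  define n where "n = m - 1"
  have "z ^ j * (deriv ^^ j) (deriv (\<lambda>z. a * z ^ m)) z = a * of_nat m * (of_nat (n choose j) * fact j * z ^ n)" for j
    using power_times_higher_deriv_power[of z 0 j n]
    by (simp add: deriv_monomial n_def higher_deriv_cmult[of _ UNIV] holomorphic_intros)
  then have "Lop \<gamma> \<delta> (\<lambda>z. a * z ^ m) z
      = of_real (real m * (\<gamma> + \<delta> * real n + (\<delta> - \<gamma>) * real (n choose 2))) * a * z ^ n"
    by (simp only: Lop_conv_higher_deriv) (simp add: field_simps)
  also have "real m * (\<gamma> + \<delta> * real n + (\<delta> - \<gamma>) * real (n choose 2)) = Lop_multiplier \<gamma> \<delta> m"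
    by (cases m) (simp_all add: n_def Lop_multiplier_Suc, simp add: Lop_multiplier_def)
  finally show ?thesis
    by (simp add: n_def)
qed

lemma RH0_coeff_bound:
  assumes "RH0 \<gamma> \<delta> lam s t" "m \<ge> 1"
  shows "cmod (taylor_coeff t m) * \<bar>Lop_multiplier \<gamma> \<delta> m\<bar> \<le> \<gamma> - lam"
proof -
  have s: "s holomorphic_on unit_disk" "deriv s 0 = 1" and t: "t holomorphic_on unit_disk"
    and dominated: "\<And>z. z \<in> unit_disk \<Longrightarrow> cmod (Lop \<gamma> \<delta> t z) < Re (Lop \<gamma> \<delta> s z - of_real lam)"
    using assms(1) unfolding RH0_def H0_def by auto
  have "cmod (taylor_coeff (Lop \<gamma> \<delta> t) (m - 1)) \<le> Re (Lop \<gamma> \<delta> s 0 - of_real lam)"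
    using dominated s t
    by (intro norm_taylor_coeff_le_Re_disk Lop_holomorphic holomorphic_intros) (auto intro: less_imp_le)
  also have "Re (Lop \<gamma> \<delta> s 0 - of_real lam) = \<gamma> - lam"
    using s by (simp add: Lop_def)
  finally show ?thesis
    using assms(2) t taylor_coeff_Lop[of t unit_disk \<gamma> \<delta> "m - 1"] by (simp add: norm_mult mult.commute)
qed

lemma RH0_monomial:
  assumes "lam < \<gamma>" "m \<ge> 2" and small: "cmod a * \<bar>Lop_multiplier \<gamma> \<delta> m\<bar> \<le> \<gamma> - lam"
  shows "RH0 \<gamma> \<delta> lam (\<lambda>z. z) (\<lambda>z. a * z ^ m)"
  unfolding RH0_def H0_def
proof (intro conjI ballI)
  show "(\<lambda>z. a * z ^ m) holomorphic_on unit_disk"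
    by (intro holomorphic_intros)
  show "deriv (\<lambda>z. a * z ^ m) 0 = 0"
    using \<open>m \<ge> 2\<close> by (simp add: deriv_monomial)
next
  fix z :: complex
  assume "z \<in> unit_disk"
  then have "cmod z ^ (m - 1) < 1"
    using \<open>m \<ge> 2\<close> by (simp add: power_less_one_iff)
  have "Lop \<gamma> \<delta> (\<lambda>z. z) z = of_real \<gamma>"
    using Lop_monomial[of \<gamma> \<delta> 1 1 z] by (simp add: Lop_multiplier_def)
  moreover have "cmod (Lop \<gamma> \<delta> (\<lambda>z. a * z ^ m) z) = cmod a * \<bar>Lop_multiplier \<gamma> \<delta> m\<bar> * cmod z ^ (m - 1)"
    by (simp add: Lop_monomial norm_mult norm_power)
  moreover have "\<dots> \<le> (\<gamma> - lam) * cmod z ^ (m - 1)"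
    using small by (intro mult_right_mono) auto
  moreover have "\<dots> < \<gamma> - lam"
    using \<open>cmod z ^ (m - 1) < 1\<close> \<open>lam < \<gamma>\<close> by simp
  ultimately show "Re (Lop \<gamma> \<delta> (\<lambda>z. z) z - of_real lam) > cmod (Lop \<gamma> \<delta> (\<lambda>z. a * z ^ m) z)"
    by simp
qed (use \<open>m \<ge> 2\<close> in auto)

theorem theorem6:
  fixes \<gamma> \<delta> lam :: real
  assumes "0 \<le> lam" and "lam < \<gamma>" and "\<gamma> \<le> \<delta>"
  shows "(\<forall>s t. RH0 \<gamma> \<delta> lam s t \<longrightarrow>
            (\<forall>m::nat. m \<ge> 2 \<longrightarrow>
               cmod (taylor_coeff t m)
                 \<le> 2 * (\<gamma> - lam) / ((real m)^2 * (2 * \<gamma> + (\<delta> - \<gamma>) * (real m - 1)))))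
       \<and> (\<forall>m::nat. m \<ge> 2 \<longrightarrow>
            (let c = 2 * (\<gamma> - lam) / ((real m)^2 * (2 * \<gamma> + (\<delta> - \<gamma>) * (real m - 1)))
             in RH0 \<gamma> \<delta> lam (\<lambda>z. z) (\<lambda>z. of_real c * z ^ m) \<and>
                cmod (taylor_coeff (\<lambda>z. of_real c * z ^ m) m) = c))"
proof -
  have M_pos: "0 < Lop_multiplier \<gamma> \<delta> m" if "m \<ge> 2" for m
    using assms that by (intro Lop_multiplier_pos) auto
  have bound_eq: "2 * (\<gamma> - lam) / ((real m)^2 * (2 * \<gamma> + (\<delta> - \<gamma>) * (real m - 1)))
      = (\<gamma> - lam) / Lop_multiplier \<gamma> \<delta> m" for m
    by (simp add: Lop_multiplier_def)
  show ?thesis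
    unfolding bound_eq
  proof (intro conjI allI impI)
    fix s t and m :: nat
    assume "RH0 \<gamma> \<delta> lam s t" "m \<ge> 2"
    then show "cmod (taylor_coeff t m) \<le> (\<gamma> - lam) / Lop_multiplier \<gamma> \<delta> m"
      using RH0_coeff_bound[of \<gamma> \<delta> lam s t m] M_pos[of m] by (simp add: pos_le_divide_eq)
  next
    fix m :: nat
    assume "m \<ge> 2"
    define c where "c = (\<gamma> - lam) / Lop_multiplier \<gamma> \<delta> m"
    have "0 \<le> c" and "c * \<bar>Lop_multiplier \<gamma> \<delta> m\<bar> = \<gamma> - lam"
      using M_pos[OF \<open>m \<ge> 2\<close>] \<open>lam < \<gamma>\<close> by (simp_all add: c_def)
    then show "let c = (\<gamma> - lam) / Lop_multiplier \<gamma> \<delta> m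
        in RH0 \<gamma> \<delta> lam (\<lambda>z. z) (\<lambda>z. of_real c * z ^ m) \<and> cmod (taylor_coeff (\<lambda>z. of_real c * z ^ m) m) = c"
      unfolding Let_def c_def[symmetric] using RH0_monomial[of lam \<gamma> m "of_real c" \<delta>] \<open>m \<ge> 2\<close> \<open>lam < \<gamma>\<close>
      by (simp add: taylor_coeff_monomial)
  qed
qed

end
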